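(* Let $\mathcal C$ be a finite set (a codebook) and let $P(\cdot\mid\cdot)$ be the transition kernel of an ergodic (irreducible and aperiodic) Markov chain on $\mathcal C$ with stationary distribution $\pi$. For each $m\in\mathbb N$ let $\boldsymbol X=\{X_{ij}\}_{1\le i,j\le m}$ be a random $m\times m$ array with entries in $\mathcal C$ generated according to either of the following two scenarios: (Scenario 1) the $m$ columns $(X_{1j},X_{2j},\dots,X_{mj})$, $j=1,\dots,m$, are mutually independent, and each is a Markov chain read from top to bottom with initial distribution $\pi$ and transition kernel $P$; (Scenario 2) the $m$ rows $(X_{i1},X_{i2},\dots,X_{im})$, $i=1,\dots,m$, are mutually independent, and each is a Markov chain read from left to right with initial distribution $\pi$ and transition kernel $P$. Let $\operatorname{flat}(\boldsymbol X)=(X_{11},\dots,X_{1m},X_{21},\dots,X_{2m},\dots,X_{m1},\dots,X_{mm})$ be the row-major flattening, and for a probability model $Q$ on finite sequences over $\mathcal C$ set $\mathcal L_m(Q)=-\frac{1}{m^2}\mathbb E[\log Q(\operatorname{flat}(\boldsymbol X))]$. Then $$\liminf_{m\to\infty}\ \min_{Q\in\mathcal Q_{\text{1-gram}}}\mathcal L_m(Q)\ \ge\ H(\pi)=-\sum_{a\in\mathcal C}\pi(a)\log\pi(a),$$ while, with the minimum taken over all probability distributions $Q$ on finite sequences over $\mathcal C$, $$\lim_{m\to\infty}\ \min_{Q}\mathcal L_m(Q)\ =\ H_\infty:=-\sum_{a\in\mathcal C}\sum_{a'\in\mathcal C}\pi(a)P(a'\mid a)\log P(a'\mid a).$$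
   Context: A unigram model $Q\in\mathcal Q_{\text{1-gram}}$ over a token set $\mathcal T$ is specified by a probability distribution $Q_\#$ on $\mathbb N$ and a probability distribution $Q_{\text{tok}}$ on $\mathcal T$, and assigns to a finite token sequence $\mathbf t=(t_1,\dots,t_{|\mathbf t|})$ the probability $Q(\mathbf t)=Q_\#(|\mathbf t|)\prod_{r=1}^{|\mathbf t|}Q_{\text{tok}}(t_r)$. Here the tokens are the elements of $\mathcal C$. Logarithms are natural; $H(p)=-\sum_{y\in\operatorname{supp}(p)}p(y)\log p(y)$ is the Shannon entropy. *)

theory Defs
  imports "HOL-Probability.Probability"
begin

text \<open>Codebook = a finite type 'a. Transition kernel P a b = P(b | a).\<close>

definition stochastic :: "('a::finite \<Rightarrow> 'a \<Rightarrow> real) \<Rightarrow> bool" where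
  "stochastic P \<longleftrightarrow> (\<forall>a b. P a b \<ge> 0) \<and> (\<forall>a. (\<Sum>b\<in>UNIV. P a b) = 1)"

fun nstep :: "('a::finite \<Rightarrow> 'a \<Rightarrow> real) \<Rightarrow> nat \<Rightarrow> 'a \<Rightarrow> 'a \<Rightarrow> real" where
  "nstep P 0 a b = (if a = b then 1 else 0)"
| "nstep P (Suc n) a b = (\<Sum>c\<in>UNIV. nstep P n a c * P c b)"

definition irreducible_chain :: "('a::finite \<Rightarrow> 'a \<Rightarrow> real) \<Rightarrow> bool" where
  "irreducible_chain P \<longleftrightarrow> (\<forall>a b. \<exists>n>0. nstep P n a b > 0)"

definition aperiodic_chain :: "('a::finite \<Rightarrow> 'a \<Rightarrow> real) \<Rightarrow> bool" where
  "aperiodic_chain P \<longleftrightarrow> (\<forall>a. Gcd {n. n > 0 \<and> nstep P n a a > 0} = 1)"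

definition ergodic_chain :: "('a::finite \<Rightarrow> 'a \<Rightarrow> real) \<Rightarrow> bool" where
  "ergodic_chain P \<longleftrightarrow> stochastic P \<and> irreducible_chain P \<and> aperiodic_chain P"

definition stationary :: "('a::finite \<Rightarrow> 'a \<Rightarrow> real) \<Rightarrow> ('a \<Rightarrow> real) \<Rightarrow> bool" where
  "stationary P \<pi> \<longleftrightarrow> (\<forall>a. \<pi> a \<ge> 0) \<and> (\<Sum>a\<in>UNIV. \<pi> a) = 1 \<and>
     (\<forall>b. (\<Sum>a\<in>UNIV. \<pi> a * P a b) = \<pi> b)"

text \<open>Law of the row-major flattening of the m x m array X, as a function on lists of
  length m^2; entry X_{ij} (0-based) is xs ! (i*m + j).\<close>
definition scen1_prob :: "('a::finite \<Rightarrow> real) \<Rightarrow> ('a \<Rightarrow> 'a \<Rightarrow> real) \<Rightarrow> nat \<Rightarrow> 'a list \<Rightarrow> real" where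
  "scen1_prob \<pi> P m xs =
     (if length xs = m^2 then
        (\<Prod>j<m. \<pi> (xs ! j) * (\<Prod>i<m - 1. P (xs ! (i*m + j)) (xs ! ((i+1)*m + j))))
      else 0)"

definition scen2_prob :: "('a::finite \<Rightarrow> real) \<Rightarrow> ('a \<Rightarrow> 'a \<Rightarrow> real) \<Rightarrow> nat \<Rightarrow> 'a list \<Rightarrow> real" where
  "scen2_prob \<pi> P m xs =
     (if length xs = m^2 then
        (\<Prod>i<m. \<pi> (xs ! (i*m)) * (\<Prod>j<m - 1. P (xs ! (i*m + j)) (xs ! (i*m + j + 1))))
      else 0)"

text \<open>L_m(Q) = -(1/m^2) E[log Q(flat X)], with value +infinity when Q(flat X) = 0
  with positive probability (expectation of log is -infinity then).\<close>
definition Lm :: "(nat \<Rightarrow> 'a::finite list \<Rightarrow> real) \<Rightarrow> nat \<Rightarrow> 'a list pmf \<Rightarrow> ereal" where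
  "Lm p m Q =
     (if \<exists>xs. length xs = m^2 \<and> p m xs > 0 \<and> pmf Q xs = 0 then \<infinity>
      else ereal (- (1 / real (m^2)) * (\<Sum>xs\<in>{xs. length xs = m^2}. p m xs * ln (pmf Q xs))))"

definition unigram_models :: "'a list pmf set" where
  "unigram_models = {Q. \<exists>(Qn::nat pmf) (Qt::'a pmf).
       \<forall>t. pmf Q t = pmf Qn (length t) * (\<Prod>r<length t. pmf Qt (t ! r))}"

definition entropy_fn :: "('a::finite \<Rightarrow> real) \<Rightarrow> real" where
  "entropy_fn \<pi> = - (\<Sum>a\<in>{a. \<pi> a \<noteq> 0}. \<pi> a * ln (\<pi> a))"

definition entropy_rate :: "('a::finite \<Rightarrow> real) \<Rightarrow> ('a \<Rightarrow> 'a \<Rightarrow> real) \<Rightarrow> real" where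
  "entropy_rate \<pi> P = - (\<Sum>a\<in>UNIV. \<Sum>a'\<in>{a'. P a a' \<noteq> 0}. \<pi> a * P a a' * ln (P a a'))"

end

theory Submission
  imports Defs
begin

text \<open>In both scenarios the row-major flattening of the array is generated sequentially:
  each entry is either a root, drawn afresh from \<open>\<pi>\<close> (the first row, resp. the first
  column), or drawn from \<open>P\<close> given one earlier entry (the one above, resp. to the left).
  By stationarity every entry is \<open>\<pi>\<close>-distributed, so the chain rule gives the exact entropy
  \<open>m H(\<pi>) + (m\<^sup>2 - m) H\<^sub>\<infinity>\<close> of the flattened array. Gibbs' inequality shows that the
  optimal model is the law itself, whence \<open>min\<^sub>Q L\<^sub>m(Q) = H\<^sub>\<infinity> + (H(\<pi>) - H\<^sub>\<infinity>)/m\<close>, while a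
  unigram model pays at least the cross entropy of \<open>\<pi>\<close> against its token distribution at
  every position, which is at least \<open>H(\<pi>)\<close>.\<close>

lemma finite_lists_length: "finite {xs :: 'a::finite list. length xs = n}"
  using finite_lists_length_eq[of "UNIV :: 'a set" n] by simp

lemma sum_lists_length_Suc:
  fixes F :: "'a::finite list \<Rightarrow> 'b::comm_monoid_add"
  shows "(\<Sum>xs | length xs = Suc n. F xs) = (\<Sum>ys | length ys = n. \<Sum>b\<in>UNIV. F (ys @ [b]))"
proof -
  have bij: "bij_betw (\<lambda>(ys, b). ys @ [b]) ({ys. length ys = n} \<times> UNIV) {xs. length xs = Suc n}"
    by (rule bij_betw_byWitness[where f'="\<lambda>xs. (butlast xs, last xs)"])
       (auto simp: image_iff, metis append_butlast_last_id list.size(3) nat.distinct(1))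
  show ?thesis
    unfolding sum.reindex_bij_betw[OF bij, symmetric] sum.cartesian_product by (simp add: split_def)
qed

definition chain_prob :: "(nat \<Rightarrow> 'a list \<Rightarrow> 'a \<Rightarrow> real) \<Rightarrow> nat \<Rightarrow> 'a list \<Rightarrow> real" where
  "chain_prob k n xs = (\<Prod>r<n. k r (take r xs) (xs ! r))"

lemma chain_prob_snoc:
  assumes "length ys = n"
  shows "chain_prob k (Suc n) (ys @ [b]) = chain_prob k n ys * k n ys b"
proof -
  have "(\<Prod>r<n. k r (take r (ys @ [b])) ((ys @ [b]) ! r)) = (\<Prod>r<n. k r (take r ys) (ys ! r))"
    using assms by (intro prod.cong) (auto simp: nth_append)
  then show ?thesis
    using assms by (simp add: chain_prob_def nth_append)
qed

locale sequential_kernel =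
  fixes k :: "nat \<Rightarrow> 'a::finite list \<Rightarrow> 'a \<Rightarrow> real"
  assumes kernel_nonneg: "0 \<le> k r ys b"
    and sum_kernel: "(\<Sum>b\<in>UNIV. k r ys b) = 1"
begin

lemma chain_prob_nonneg: "0 \<le> chain_prob k n xs"
  unfolding chain_prob_def by (intro prod_nonneg) (simp add: kernel_nonneg)

lemma sum_chain_prob_prefix:
  "n \<le> N \<Longrightarrow> (\<Sum>xs | length xs = N. chain_prob k N xs * G (take n xs))
      = (\<Sum>ys | length ys = n. chain_prob k n ys * G ys)"
proof (induction N)
  case 0
  then show ?case by simp
next
  case (Suc N)
  show ?case
  proof (cases "n = Suc N")
    case True
    then show ?thesis by (intro sum.cong) auto
  next
    case False
    then have "n \<le> N" using Suc.prems by simp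
    have "(\<Sum>xs | length xs = Suc N. chain_prob k (Suc N) xs * G (take n xs))
        = (\<Sum>ys | length ys = N. chain_prob k N ys * G (take n ys) * (\<Sum>b\<in>UNIV. k N ys b))"
      unfolding sum_lists_length_Suc using \<open>n \<le> N\<close>
      by (intro sum.cong refl) (auto simp: chain_prob_snoc sum_distrib_left algebra_simps)
    then show ?thesis
      using Suc.IH \<open>n \<le> N\<close> by (simp add: sum_kernel)
  qed
qed

lemma sum_chain_prob: "(\<Sum>xs | length xs = N. chain_prob k N xs) = 1"
  using sum_chain_prob_prefix[of 0 N "\<lambda>_. 1"] by (simp add: chain_prob_def)

lemma sum_chain_prob_position:
  assumes "r < N"
  shows "(\<Sum>xs | length xs = N. chain_prob k N xs * G (take r xs) (xs ! r))
      = (\<Sum>ys | length ys = r. chain_prob k r ys * (\<Sum>b\<in>UNIV. k r ys b * G ys b))"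
proof -
  have "(\<Sum>xs | length xs = N. chain_prob k N xs * G (take r xs) (xs ! r))
      = (\<Sum>xs | length xs = N. chain_prob k N xs * (\<lambda>zs. G (take r zs) (zs ! r)) (take (Suc r) xs))"
    using assms by (intro sum.cong) auto
  also have "\<dots> = (\<Sum>zs | length zs = Suc r. chain_prob k (Suc r) zs * G (take r zs) (zs ! r))"
    using assms by (subst sum_chain_prob_prefix) auto
  also have "\<dots> = (\<Sum>ys | length ys = r. chain_prob k r ys * (\<Sum>b\<in>UNIV. k r ys b * G ys b))"
    unfolding sum_lists_length_Suc
    by (intro sum.cong refl) (auto simp: chain_prob_snoc nth_append sum_distrib_left algebra_simps)
  finally show ?thesis .
qed

lemma sum_chain_prob_ln:
  "(\<Sum>xs | length xs = N. chain_prob k N xs * ln (chain_prob k N xs))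
    = (\<Sum>r<N. \<Sum>ys | length ys = r. chain_prob k r ys * (\<Sum>b\<in>UNIV. k r ys b * ln (k r ys b)))"
proof -
  have ln_chain: "chain_prob k N xs * ln (chain_prob k N xs)
      = chain_prob k N xs * (\<Sum>r<N. ln (k r (take r xs) (xs ! r)))" for xs
  proof (cases "chain_prob k N xs = 0")
    case False
    then show ?thesis
      unfolding chain_prob_def by (subst ln_prod) auto
  qed simp
  have "(\<Sum>xs | length xs = N. chain_prob k N xs * ln (chain_prob k N xs))
      = (\<Sum>r<N. \<Sum>xs | length xs = N. chain_prob k N xs * ln (k r (take r xs) (xs ! r)))"
    unfolding ln_chain sum_distrib_left by (rule sum.swap)
  also have "\<dots> = (\<Sum>r<N. \<Sum>ys | length ys = r. chain_prob k r ys * (\<Sum>b\<in>UNIV. k r ys b * ln (k r ys b)))"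
  proof (rule sum.cong[OF refl])
    fix r assume "r \<in> {..<N}"
    then show "(\<Sum>xs | length xs = N. chain_prob k N xs * ln (k r (take r xs) (xs ! r)))
        = (\<Sum>ys | length ys = r. chain_prob k r ys * (\<Sum>b\<in>UNIV. k r ys b * ln (k r ys b)))"
      using sum_chain_prob_position[of r N "\<lambda>ys b. ln (k r ys b)"] by simp
  qed
  finally show ?thesis .
qed

end

lemma entropy_fn_eq_sum: "entropy_fn \<pi> = - (\<Sum>a\<in>UNIV. \<pi> a * ln (\<pi> a))"
  unfolding entropy_fn_def by (subst sum.mono_neutral_left[of UNIV]) auto

lemma entropy_rate_eq_sum:
  "entropy_rate \<pi> P = - (\<Sum>a\<in>UNIV. \<pi> a * (\<Sum>b\<in>UNIV. P a b * ln (P a b)))"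
  unfolding entropy_rate_def
  by (intro arg_cong[where f=uminus] sum.cong refl, subst sum.mono_neutral_left[of UNIV])
     (auto simp: sum_distrib_left mult.assoc)

text \<open>The argument \<open>ys\<close> is the prefix of length \<open>r\<close> generated so far, so a non-root entry
  depends on the single earlier entry at position \<open>parent r\<close>.\<close>

definition forest_kernel ::
  "('a \<Rightarrow> real) \<Rightarrow> ('a \<Rightarrow> 'a \<Rightarrow> real) \<Rightarrow> (nat \<Rightarrow> bool) \<Rightarrow> (nat \<Rightarrow> nat) \<Rightarrow> nat \<Rightarrow> 'a list \<Rightarrow> 'a \<Rightarrow> real"
  where "forest_kernel \<pi> P is_root parent r ys b = (if is_root r then \<pi> b else P (ys ! parent r) b)"

locale stationary_forest =
  fixes P :: "'a::finite \<Rightarrow> 'a \<Rightarrow> real" and \<pi> :: "'a \<Rightarrow> real"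
    and is_root :: "nat \<Rightarrow> bool" and parent :: "nat \<Rightarrow> nat"
  assumes stochastic: "stochastic P"
    and stationary: "stationary P \<pi>"
    and parent_less: "\<not> is_root r \<Longrightarrow> parent r < r"
begin

abbreviation kernel :: "nat \<Rightarrow> 'a list \<Rightarrow> 'a \<Rightarrow> real" where
  "kernel \<equiv> forest_kernel \<pi> P is_root parent"

sublocale sequential_kernel kernel
proof
  fix r ys b
  show "0 \<le> kernel r ys b" "(\<Sum>b\<in>UNIV. kernel r ys b) = 1"
    using stochastic stationary
    by (cases "is_root r"; simp add: forest_kernel_def stochastic_def stationary_def)+
qed

lemma sum_chain_prob_nth:
  "r < N \<Longrightarrow> (\<Sum>xs | length xs = N. chain_prob kernel N xs * g (xs ! r)) = (\<Sum>a\<in>UNIV. \<pi> a * g a)"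
proof (induction r arbitrary: N g rule: less_induct)
  case (less r)
  have "(\<Sum>xs | length xs = N. chain_prob kernel N xs * g (xs ! r))
      = (\<Sum>ys | length ys = r. chain_prob kernel r ys * (\<Sum>b\<in>UNIV. kernel r ys b * g b))"
    using sum_chain_prob_position[OF less.prems, of "\<lambda>_ b. g b"] by simp
  also have "\<dots> = (\<Sum>a\<in>UNIV. \<pi> a * g a)"
  proof (cases "is_root r")
    case True
    then show ?thesis
      by (simp add: forest_kernel_def sum_chain_prob flip: sum_distrib_right)
  next
    case False
    define h where "h a = (\<Sum>b\<in>UNIV. P a b * g b)" for a
    have "(\<Sum>ys | length ys = r. chain_prob kernel r ys * (\<Sum>b\<in>UNIV. kernel r ys b * g b))
        = (\<Sum>ys | length ys = r. chain_prob kernel r ys * h (ys ! parent r))"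
      using False by (simp add: forest_kernel_def h_def)
    also have "\<dots> = (\<Sum>a\<in>UNIV. \<pi> a * h a)"
      using less.IH[OF parent_less[OF False] parent_less[OF False]] .
    also have "\<dots> = (\<Sum>b\<in>UNIV. (\<Sum>a\<in>UNIV. \<pi> a * P a b) * g b)"
      unfolding h_def sum_distrib_left sum_distrib_right by (subst sum.swap) (simp add: mult.assoc)
    also have "\<dots> = (\<Sum>b\<in>UNIV. \<pi> b * g b)"
      using stationary by (simp add: stationary_def)
    finally show ?thesis .
  qed
  finally show ?case .
qed

lemma sum_chain_prob_ln_eq_entropies:
  "(\<Sum>xs | length xs = N. chain_prob kernel N xs * ln (chain_prob kernel N xs))
    = - (real (card {r. r < N \<and> is_root r}) * entropy_fn \<pi>
         + (real N - real (card {r. r < N \<and> is_root r})) * entropy_rate \<pi> P)"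
proof -
  have position: "(\<Sum>ys | length ys = r. chain_prob kernel r ys * (\<Sum>b\<in>UNIV. kernel r ys b * ln (kernel r ys b)))
      = (if is_root r then - entropy_fn \<pi> else - entropy_rate \<pi> P)" for r
  proof (cases "is_root r")
    case True
    then show ?thesis
      by (simp add: forest_kernel_def entropy_fn_eq_sum sum_chain_prob flip: sum_distrib_right)
  next
    case False
    then show ?thesis
      using sum_chain_prob_nth[OF parent_less[OF False], of "\<lambda>a. \<Sum>b\<in>UNIV. P a b * ln (P a b)"]
      by (simp add: forest_kernel_def entropy_rate_eq_sum)
  qed
  have roots: "{..<N} \<inter> {r. is_root r} = {r. r < N \<and> is_root r}" by auto
  have "{..<N} \<inter> - {r. is_root r} = {..<N} - {r. r < N \<and> is_root r}" by auto
  then have "card ({..<N} \<inter> - {r. is_root r}) = N - card {r. r < N \<and> is_root r}"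
    using card_Diff_subset[of "{r. r < N \<and> is_root r}" "{..<N}"] by auto
  moreover have "card {r. r < N \<and> is_root r} \<le> N"
    using card_mono[of "{..<N}" "{r. r < N \<and> is_root r}"] by auto
  ultimately show ?thesis
    unfolding sum_chain_prob_ln position by (simp add: sum.If_cases roots)
qed

end

lemma gibbs_inequality:
  fixes p q :: "'b \<Rightarrow> real"
  assumes "\<And>x. x \<in> S \<Longrightarrow> 0 \<le> p x" "\<And>x. x \<in> S \<Longrightarrow> 0 \<le> q x"
    and "sum p S = 1" "sum q S \<le> 1"
    and "\<And>x. x \<in> S \<Longrightarrow> 0 < p x \<Longrightarrow> 0 < q x"
  shows "(\<Sum>x\<in>S. p x * ln (q x)) \<le> (\<Sum>x\<in>S. p x * ln (p x))"
proof -
  have "p x * ln (q x) - p x * ln (p x) \<le> q x - p x" if "x \<in> S" for x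
  proof (cases "p x = 0")
    case True
    then show ?thesis using assms(2) that by simp
  next
    case False
    then have "0 < p x" "0 < q x" using assms(1,5) that by force+
    then have "p x * ln (q x / p x) \<le> p x * (q x / p x - 1)"
      by (intro mult_left_mono ln_le_minus_one) auto
    then show ?thesis using \<open>0 < p x\<close> \<open>0 < q x\<close> by (simp add: ln_div algebra_simps)
  qed
  then have "(\<Sum>x\<in>S. p x * ln (q x) - p x * ln (p x)) \<le> (\<Sum>x\<in>S. q x - p x)"
    by (rule sum_mono)
  then show ?thesis using assms(3,4) by (simp add: sum_subtractf)
qed

lemma Lm_ge_entropy:
  fixes p :: "nat \<Rightarrow> 'a::finite list \<Rightarrow> real"
  assumes nonneg: "\<And>xs. 0 \<le> p m xs"
    and sum_one: "(\<Sum>xs | length xs = m^2. p m xs) = 1"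
  shows "ereal (- (1 / real (m^2)) * (\<Sum>xs | length xs = m^2. p m xs * ln (p m xs))) \<le> Lm p m Q"
proof (cases "\<exists>xs. length xs = m^2 \<and> p m xs > 0 \<and> pmf Q xs = 0")
  case False
  have "(\<Sum>xs | length xs = m^2. p m xs * ln (pmf Q xs)) \<le> (\<Sum>xs | length xs = m^2. p m xs * ln (p m xs))"
  proof (rule gibbs_inequality)
    show "sum (pmf Q) {xs. length xs = m^2} \<le> 1"
      by (metis measure_measure_pmf_finite[OF finite_lists_length] measure_pmf.prob_le_1)
  qed (use False nonneg sum_one in \<open>auto simp: less_le\<close>)
  then show ?thesis
    using False by (simp add: Lm_def divide_right_mono)
qed (simp add: Lm_def)

lemma INF_Lm_eq_entropy:
  fixes p :: "nat \<Rightarrow> 'a::finite list \<Rightarrow> real"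
  assumes nonneg: "\<And>xs. 0 \<le> p m xs"
    and support: "\<And>xs. length xs \<noteq> m^2 \<Longrightarrow> p m xs = 0"
    and sum_one: "(\<Sum>xs | length xs = m^2. p m xs) = 1"
  shows "(INF Q\<in>UNIV. Lm p m Q) = ereal (- (1 / real (m^2)) * (\<Sum>xs | length xs = m^2. p m xs * ln (p m xs)))"
proof (rule antisym)
  have "(\<integral>\<^sup>+xs. ennreal (p m xs) \<partial>count_space UNIV) = 1"
    using nonneg support sum_one by (subst nn_integral_count_space'[OF finite_lists_length]) auto
  then have pmf_law: "pmf (embed_pmf (p m)) xs = p m xs" for xs
    by (rule pmf_embed_pmf[OF nonneg])
  show "(INF Q\<in>UNIV. Lm p m Q) \<le> ereal (- (1 / real (m^2)) * (\<Sum>xs | length xs = m^2. p m xs * ln (p m xs)))"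
    by (rule INF_lower2[of "embed_pmf (p m)"]) (auto simp: Lm_def pmf_law)
qed (use Lm_ge_entropy[of p m, OF nonneg sum_one] in \<open>rule INF_greatest\<close>)

lemma ln_pmf_unigram:
  assumes "\<And>t. pmf Q t = pmf Qn (length t) * (\<Prod>r<length t. pmf Qt (t ! r))"
    and "pmf Q xs \<noteq> 0"
  shows "ln (pmf Q xs) = ln (pmf Qn (length xs)) + (\<Sum>r<length xs. ln (pmf Qt (xs ! r)))"
proof -
  have nonzero: "pmf Qn (length xs) \<noteq> 0" "\<And>r. r < length xs \<Longrightarrow> pmf Qt (xs ! r) \<noteq> 0"
    using assms by auto
  then have "ln (\<Prod>r<length xs. pmf Qt (xs ! r)) = (\<Sum>r<length xs. ln (pmf Qt (xs ! r)))"
    by (subst ln_prod) auto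
  then show ?thesis
    unfolding assms(1) using nonzero pmf_nonneg
    by (subst ln_mult) (auto simp: less_le intro!: prod_pos)
qed

lemma marginal_pos_witness:
  fixes p :: "'a::finite list \<Rightarrow> real"
  assumes nonneg: "\<And>xs. 0 \<le> p xs"
    and marginal: "\<And>g. (\<Sum>xs | length xs = N. p xs * g (xs ! 0)) = (\<Sum>a\<in>UNIV. \<pi> a * g a)"
  shows "0 \<le> \<pi> a"
    and "0 < \<pi> a \<Longrightarrow> \<exists>xs. length xs = N \<and> 0 < p xs \<and> xs ! 0 = a"
proof -
  have indicator: "(\<Sum>xs | length xs = N. p xs * (if xs ! 0 = a then 1 else 0)) = \<pi> a"
    using marginal[of "\<lambda>b. if b = a then 1 else 0"]
    by (simp add: if_distrib[of "times _"] cong: if_cong)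
  have "0 \<le> (\<Sum>xs | length xs = N. p xs * (if xs ! 0 = a then 1 else 0))"
    by (intro sum_nonneg) (simp add: nonneg)
  then show "0 \<le> \<pi> a"
    by (simp only: indicator)
  assume "0 < \<pi> a"
  then have "(\<Sum>xs | length xs = N. p xs * (if xs ! 0 = a then 1 else 0)) \<noteq> 0"
    by (simp only: indicator)
  then obtain xs where xs: "xs \<in> {xs. length xs = N}" "p xs * (if xs ! 0 = a then 1 else 0) \<noteq> 0"
    by (rule sum.not_neutral_contains_not_neutral)
  then have "0 < p xs" "xs ! 0 = a"
    using nonneg[of xs] by (simp_all split: if_splits)
  then show "\<exists>xs. length xs = N \<and> 0 < p xs \<and> xs ! 0 = a"
    using xs(1) by blast
qed

lemma unigram_Lm_ge_entropy:
  fixes p :: "nat \<Rightarrow> 'a::finite list \<Rightarrow> real" and \<pi> :: "'a \<Rightarrow> real"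
  assumes "0 < m"
    and nonneg: "\<And>xs. 0 \<le> p m xs"
    and sum_one: "(\<Sum>xs | length xs = m^2. p m xs) = 1"
    and marginal: "\<And>r g. r < m^2 \<Longrightarrow> (\<Sum>xs | length xs = m^2. p m xs * g (xs ! r)) = (\<Sum>a\<in>UNIV. \<pi> a * g a)"
    and "Q \<in> unigram_models"
  shows "ereal (entropy_fn \<pi>) \<le> Lm p m Q"
proof (cases "\<exists>xs. length xs = m^2 \<and> p m xs > 0 \<and> pmf Q xs = 0")
  case False
  define N where "N = m^2"
  have "0 < N" using \<open>0 < m\<close> by (simp add: N_def)
  obtain Qn :: "nat pmf" and Qt :: "'a pmf" where
    unigram: "\<And>t. pmf Q t = pmf Qn (length t) * (\<Prod>r<length t. pmf Qt (t ! r))"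
    using \<open>Q \<in> unigram_models\<close> unfolding unigram_models_def by blast
  have marginal_0: "(\<Sum>xs | length xs = N. p m xs * g (xs ! 0)) = (\<Sum>a\<in>UNIV. \<pi> a * g a)" for g
    using marginal[of 0 g] \<open>0 < N\<close> by (simp add: N_def)
  have "0 < pmf Qt a" if "0 < \<pi> a" for a
  proof -
    obtain xs where xs: "length xs = N" "0 < p m xs" "xs ! 0 = a"
      using marginal_pos_witness(2)[of "p m", OF nonneg marginal_0 \<open>0 < \<pi> a\<close>] by blast
    then have "pmf Q xs \<noteq> 0"
      using False by (auto simp: N_def)
    then have "pmf Qt (xs ! 0) \<noteq> 0"
      using xs(1) \<open>0 < N\<close> by (simp add: unigram)
    then show ?thesis
      using \<open>xs ! 0 = a\<close> pmf_nonneg[of Qt a] by simp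
  qed
  moreover have "0 \<le> \<pi> a" for a
    by (rule marginal_pos_witness(1)[of "p m", OF nonneg marginal_0])
  moreover have "(\<Sum>a\<in>UNIV. \<pi> a) = 1"
    using marginal[of 0 "\<lambda>_. 1"] sum_one \<open>0 < N\<close> by (simp add: N_def)
  moreover have "(\<Sum>a\<in>UNIV. pmf Qt a) = 1"
    by (rule sum_pmf_eq_1) auto
  ultimately have gibbs: "(\<Sum>a\<in>UNIV. \<pi> a * ln (pmf Qt a)) \<le> (\<Sum>a\<in>UNIV. \<pi> a * ln (\<pi> a))"
    by (intro gibbs_inequality) auto
  have "(\<Sum>xs | length xs = N. p m xs * ln (pmf Q xs))
      = (\<Sum>xs | length xs = N. p m xs * ln (pmf Qn N) + (\<Sum>r<N. p m xs * ln (pmf Qt (xs ! r))))"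
    using False nonneg
    by (intro sum.cong refl) (auto simp: ln_pmf_unigram[OF unigram] N_def less_le sum_distrib_left
        distrib_left)
  also have "\<dots> = ln (pmf Qn N) + (\<Sum>r<N. \<Sum>xs | length xs = N. p m xs * ln (pmf Qt (xs ! r)))"
    unfolding sum.distrib using sum_one by (subst sum.swap) (simp add: N_def flip: sum_distrib_right)
  also have "\<dots> = ln (pmf Qn N) + real N * (\<Sum>a\<in>UNIV. \<pi> a * ln (pmf Qt a))"
    using marginal[of _ "\<lambda>a. ln (pmf Qt a)"] by (simp add: N_def)
  also have "\<dots> \<le> real N * (\<Sum>a\<in>UNIV. \<pi> a * ln (\<pi> a))"
  proof -
    have "ln (pmf Qn N) \<le> 0"
      using pmf_nonneg[of Qn N] pmf_le_1[of Qn N] by (cases "pmf Qn N = 0") auto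
    then show ?thesis
      using mult_left_mono[OF gibbs of_nat_0_le_iff[of N]] by linarith
  qed
  finally have "- (1 / real N) * (real N * (\<Sum>a\<in>UNIV. \<pi> a * ln (\<pi> a)))
      \<le> - (1 / real N) * (\<Sum>xs | length xs = N. p m xs * ln (pmf Q xs))"
    by (intro mult_left_mono_neg) auto
  then show ?thesis
    using False \<open>0 < N\<close> by (simp add: Lm_def N_def entropy_fn_eq_sum)
qed (simp add: Lm_def)

lemma prod_lessThan_mult:
  fixes f :: "nat \<Rightarrow> 'b::comm_monoid_mult"
  shows "(\<Prod>r<n * m. f r) = (\<Prod>i<n. \<Prod>j<m. f (i * m + j))"
proof -
  have "prod f {i * m..<i * m + m} = (\<Prod>j<m. f (i * m + j))" for i
    using prod.shift_bounds_nat_ivl[of f 0 "i * m" m] by (simp add: atLeast0LessThan add.commute)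
  then show ?thesis
    by (simp add: prod.nat_group[symmetric])
qed

lemma scen1_prob_eq_chain_prob:
  assumes "0 < m"
  shows "scen1_prob \<pi> P m xs
    = (if length xs = m^2 then chain_prob (forest_kernel \<pi> P (\<lambda>r. r < m) (\<lambda>r. r - m)) (m^2) xs else 0)"
proof (cases "length xs = m^2")
  case True
  obtain n where m: "m = Suc n" using assms by (cases m) auto
  have entry: "forest_kernel \<pi> P (\<lambda>r. r < m) (\<lambda>r. r - m) (i * m + j) (take (i * m + j) xs) (xs ! (i * m + j))
      = (if i = 0 then \<pi> (xs ! j) else P (xs ! ((i - 1) * m + j)) (xs ! (i * m + j)))"
    if "j < m" for i j
  proof (cases i)
    case (Suc i')
    then have "\<not> i * m + j < m" "i * m + j - m = i' * m + j" "i' * m + j < i * m + j"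
      using assms by auto
    then show ?thesis by (simp add: forest_kernel_def Suc)
  qed (simp add: forest_kernel_def that)
  have "chain_prob (forest_kernel \<pi> P (\<lambda>r. r < m) (\<lambda>r. r - m)) (m^2) xs
      = (\<Prod>i<m. \<Prod>j<m. if i = 0 then \<pi> (xs ! j) else P (xs ! ((i - 1) * m + j)) (xs ! (i * m + j)))"
    unfolding chain_prob_def power2_eq_square prod_lessThan_mult by (intro prod.cong refl entry) simp
  also have "\<dots> = (\<Prod>j<m. \<pi> (xs ! j)) * (\<Prod>i<n. \<Prod>j<m. P (xs ! (i * m + j)) (xs ! ((i + 1) * m + j)))"
    unfolding m by (subst prod.lessThan_Suc_shift) simp
  also have "\<dots> = (\<Prod>j<m. \<pi> (xs ! j) * (\<Prod>i<m - 1. P (xs ! (i * m + j)) (xs ! ((i + 1) * m + j))))"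
    by (subst prod.swap) (simp add: prod.distrib m)
  finally show ?thesis
    using True by (simp add: scen1_prob_def)
qed (simp add: scen1_prob_def)

lemma scen2_prob_eq_chain_prob:
  assumes "0 < m"
  shows "scen2_prob \<pi> P m xs
    = (if length xs = m^2 then chain_prob (forest_kernel \<pi> P (\<lambda>r. r mod m = 0) (\<lambda>r. r - 1)) (m^2) xs else 0)"
proof (cases "length xs = m^2")
  case True
  obtain n where m: "m = Suc n" using assms by (cases m) auto
  have entry: "forest_kernel \<pi> P (\<lambda>r. r mod m = 0) (\<lambda>r. r - 1) (i * m + j) (take (i * m + j) xs) (xs ! (i * m + j))
      = (if j = 0 then \<pi> (xs ! (i * m)) else P (xs ! (i * m + j - 1)) (xs ! (i * m + j)))"
    if "j < m" for i j
    using that by (simp add: forest_kernel_def)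
  have "chain_prob (forest_kernel \<pi> P (\<lambda>r. r mod m = 0) (\<lambda>r. r - 1)) (m^2) xs
      = (\<Prod>i<m. \<Prod>j<m. if j = 0 then \<pi> (xs ! (i * m)) else P (xs ! (i * m + j - 1)) (xs ! (i * m + j)))"
    unfolding chain_prob_def power2_eq_square prod_lessThan_mult by (intro prod.cong refl entry) simp
  also have "\<dots> = (\<Prod>i<m. \<pi> (xs ! (i * m)) * (\<Prod>j<m - 1. P (xs ! (i * m + j)) (xs ! (i * m + j + 1))))"
    unfolding m by (intro prod.cong refl, subst prod.lessThan_Suc_shift) simp
  finally show ?thesis
    using True by (simp add: scen2_prob_def)
qed (simp add: scen2_prob_def)

lemma card_lessThan_square_less:
  "card {r. r < m^2 \<and> r < m} = m"
proof -
  have "{r. r < m^2 \<and> r < m} = {..<m}"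
    by (auto simp: power2_eq_square intro: less_le_trans[OF _ le_square])
  then show ?thesis by simp
qed

lemma card_lessThan_square_mod_eq_0:
  assumes "0 < m"
  shows "card {r. r < m^2 \<and> r mod m = 0} = m"
proof -
  have "{r. r < m^2 \<and> r mod m = 0} = (\<lambda>i. i * m) ` {..<m}"
    using assms by (auto simp: power2_eq_square simp flip: dvd_eq_mod_eq_0)
  moreover have "inj_on (\<lambda>i. i * m) {..<m}"
    using assms by (auto intro: inj_onI)
  ultimately show ?thesis
    by (simp add: card_image)
qed

lemma scenario_forest:
  assumes "p = scen1_prob \<pi> P \<or> p = scen2_prob \<pi> P" and "0 < m"
  obtains is_root parent where "\<And>r. \<not> is_root r \<Longrightarrow> parent r < r"
    and "\<And>xs. p m xs
      = (if length xs = m^2 then chain_prob (forest_kernel \<pi> P is_root parent) (m^2) xs else 0)"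
    and "card {r. r < m^2 \<and> is_root r} = m"
  using assms(1)
proof
  assume "p = scen1_prob \<pi> P"
  then show thesis
    using assms(2) by (intro that[of "\<lambda>r. r < m" "\<lambda>r. r - m"])
       (auto simp: scen1_prob_eq_chain_prob card_lessThan_square_less)
next
  assume "p = scen2_prob \<pi> P"
  then have "p m = scen2_prob \<pi> P m" by simp
  show thesis
  proof (rule that[of "\<lambda>r. r mod m = 0" "\<lambda>r. r - 1"])
    show "r - 1 < r" if "\<not> r mod m = 0" for r
      using that by (cases r) auto
  qed (simp_all add: \<open>p m = scen2_prob \<pi> P m\<close> scen2_prob_eq_chain_prob card_lessThan_square_mod_eq_0 assms(2))
qed

lemma Lm_scenario:
  fixes P :: "'a::finite \<Rightarrow> 'a \<Rightarrow> real"
  assumes "stochastic P" and "stationary P \<pi>"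
    and "p = scen1_prob \<pi> P \<or> p = scen2_prob \<pi> P" and "0 < m"
  shows "(INF Q\<in>UNIV. Lm p m Q) = ereal (entropy_rate \<pi> P + (entropy_fn \<pi> - entropy_rate \<pi> P) / real m)"
    and "Q \<in> unigram_models \<Longrightarrow> ereal (entropy_fn \<pi>) \<le> Lm p m Q"
proof -
  obtain is_root parent where parent_less: "\<And>r. \<not> is_root r \<Longrightarrow> parent r < r"
    and law: "\<And>xs. p m xs
      = (if length xs = m^2 then chain_prob (forest_kernel \<pi> P is_root parent) (m^2) xs else 0)"
    and roots: "card {r. r < m^2 \<and> is_root r} = m"
    using scenario_forest[OF assms(3,4)] by blast
  interpret stationary_forest P \<pi> is_root parent
    using assms(1,2) parent_less by unfold_locales
  have on_support: "(\<Sum>xs | length xs = m^2. f (p m xs) xs)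
      = (\<Sum>xs | length xs = m^2. f (chain_prob kernel (m^2) xs) xs)" for f :: "real \<Rightarrow> 'a list \<Rightarrow> real"
    by (intro sum.cong) (simp_all add: law)
  have nonneg: "0 \<le> p m xs" for xs
    by (simp add: law chain_prob_nonneg)
  have support: "length xs \<noteq> m^2 \<Longrightarrow> p m xs = 0" for xs
    by (simp add: law)
  have sum_one: "(\<Sum>xs | length xs = m^2. p m xs) = 1"
    using on_support[of "\<lambda>q _. q"] by (simp add: sum_chain_prob)
  have entropy: "(\<Sum>xs | length xs = m^2. p m xs * ln (p m xs))
      = - (real m * entropy_fn \<pi> + (real m ^ 2 - real m) * entropy_rate \<pi> P)"
    using on_support[of "\<lambda>q _. q * ln q"] by (simp add: sum_chain_prob_ln_eq_entropies roots)
  show "(INF Q\<in>UNIV. Lm p m Q) = ereal (entropy_rate \<pi> P + (entropy_fn \<pi> - entropy_rate \<pi> P) / real m)"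
  proof -
    have "(INF Q\<in>UNIV. Lm p m Q)
        = ereal (- (1 / real (m^2)) * (\<Sum>xs | length xs = m^2. p m xs * ln (p m xs)))"
      by (rule INF_Lm_eq_entropy[of p m, OF nonneg support sum_one])
    then show ?thesis
      using assms(4) by (simp add: entropy) (simp add: field_simps power2_eq_square)
  qed
  show "Q \<in> unigram_models \<Longrightarrow> ereal (entropy_fn \<pi>) \<le> Lm p m Q"
    using on_support[of "\<lambda>q xs. q * g (xs ! r)" for g r]
    by (intro unigram_Lm_ge_entropy[where p=p and m=m, OF assms(4) nonneg sum_one]) (simp_all add: sum_chain_prob_nth)
qed

theorem proposition1:
  fixes P :: "'a::finite \<Rightarrow> 'a \<Rightarrow> real" and \<pi> :: "'a \<Rightarrow> real"
    and p :: "nat \<Rightarrow> 'a list \<Rightarrow> real"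
  assumes "ergodic_chain P"
    and "stationary P \<pi>"
    and "p = scen1_prob \<pi> P \<or> p = scen2_prob \<pi> P"
  shows "liminf (\<lambda>m. INF Q\<in>unigram_models. Lm p m Q) \<ge> ereal (entropy_fn \<pi>)
     \<and> ((\<lambda>m. INF Q\<in>UNIV. Lm p m Q) \<longlonglongrightarrow> ereal (entropy_rate \<pi> P))"
proof
  have "stochastic P"
    using assms(1) by (simp add: ergodic_chain_def)
  note Lm_m = Lm_scenario[OF this assms(2,3)]
  have eventually_pos: "eventually (\<lambda>m. 0 < m) sequentially"
    by (rule eventually_gt_at_top)
  show "liminf (\<lambda>m. INF Q\<in>unigram_models. Lm p m Q) \<ge> ereal (entropy_fn \<pi>)"
    by (intro Liminf_bounded eventually_mono[OF eventually_pos] INF_greatest Lm_m(2))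
  have "(\<lambda>m. entropy_rate \<pi> P + (entropy_fn \<pi> - entropy_rate \<pi> P) / real m) \<longlonglongrightarrow> entropy_rate \<pi> P"
    using tendsto_add[OF tendsto_const lim_const_over_n] by simp
  then show "(\<lambda>m. INF Q\<in>UNIV. Lm p m Q) \<longlonglongrightarrow> ereal (entropy_rate \<pi> P)"
    unfolding lim_ereal[symmetric]
    by (rule Lim_transform_eventually) (use eventually_mono[OF eventually_pos] Lm_m(1) in auto)
qed

end
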